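(* Let $n,m\ge1$, let $K\subset\mathbb{R}^n$ be compact, let $f:K\to\mathbb{R}$ be continuous and $\varepsilon>0$. Then there exists an IWCNN $f_\theta=g^{\mathrm{ICNN}}_{\theta_1}\circ g^{\mathrm{sm}}_{\theta_2}$ with intermediate dimension $m$ (i.e. $g^{\mathrm{sm}}_{\theta_2}:\mathbb{R}^n\to\mathbb{R}^m$ and $g^{\mathrm{ICNN}}_{\theta_1}:\mathbb{R}^m\to\mathbb{R}$) such that $\sup_{x\in K}|f_\theta(x)-f(x)|<\varepsilon$.
   Context: An input convex neural network (ICNN) $g:\mathbb{R}^m\to\mathbb{R}$ is a feedforward network $z_1=\sigma(W_0^{(y)}u+b_0)$, $z_{i+1}=\sigma(W_i^{(z)}z_i+W_i^{(y)}u+b_i)$, output $g(u)=z_L$ (final layer affine allowed), with nonnegative weight matrices $W_i^{(z)}$ and \texttt{ReLU} (or other convex nondecreasing) activations $\sigma$, so that $g$ is convex in its input $u$. $g^{\mathrm{sm}}:\mathbb{R}^n\to\mathbb{R}^m$ is a feedforward neural network (of arbitrary depth) whose activation functions are nonaffine, continuously differentiable with Lipschitz derivative (e.g. SiLU). An input weakly convex neural network (IWCNN) is a composition $g^{\mathrm{ICNN}}\circ g^{\mathrm{sm}}$ of such networks. *)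

theory Defs
  imports "HOL-Analysis.Analysis"
begin

text \<open>Vectors of hidden layers are represented as functions nat => real; a hidden
layer of input width d only reads the coordinates j < d.\<close>

definition relu :: "real \<Rightarrow> real" where
  "relu x = max 0 x"

definition smooth_activation :: "(real \<Rightarrow> real) \<Rightarrow> bool" where
  "smooth_activation \<rho> \<longleftrightarrow>
     (\<exists>\<rho>'. (\<forall>x. (\<rho> has_real_derivative \<rho>' x) (at x)) \<and> (\<exists>L. L-lipschitz_on UNIV \<rho>'))
     \<and> \<not> (\<exists>a b. \<forall>x. \<rho> x = a * x + b)"

text \<open>Smooth feedforward network R^n -> R^m:
  first layer (W0,b0) from real^'n, hidden layers (d,W,b) with input width d,
  all followed by the activation; final affine layer (dL,V,c) into real^'m.\<close>
datatype ('n, 'm) smooth_net =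
  SNet "nat \<Rightarrow> 'n \<Rightarrow> real" "nat \<Rightarrow> real"
       "(nat \<times> (nat \<Rightarrow> nat \<Rightarrow> real) \<times> (nat \<Rightarrow> real)) list"
       nat "'m \<Rightarrow> nat \<Rightarrow> real" "'m \<Rightarrow> real"

fun sm_hidden :: "(real \<Rightarrow> real) \<Rightarrow> (nat \<times> (nat \<Rightarrow> nat \<Rightarrow> real) \<times> (nat \<Rightarrow> real)) list
                   \<Rightarrow> (nat \<Rightarrow> real) \<Rightarrow> (nat \<Rightarrow> real)" where
  "sm_hidden \<rho> [] z = z"
| "sm_hidden \<rho> ((d, W, b) # hs) z =
     sm_hidden \<rho> hs (\<lambda>i. \<rho> (b i + (\<Sum>j<d. W i j * z j)))"

fun sm_eval :: "(real \<Rightarrow> real) \<Rightarrow> ('n::finite, 'm::finite) smooth_net \<Rightarrow> real^'n \<Rightarrow> real^'m" where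
  "sm_eval \<rho> (SNet W0 b0 hs dL V c) x =
     (let z1 = (\<lambda>i. \<rho> (b0 i + (\<Sum>j\<in>UNIV. W0 i j * x $ j)));
          zL = sm_hidden \<rho> hs z1
      in \<chi> k. c k + (\<Sum>j<dL. V k j * zL j))"

text \<open>ICNN R^m -> R with ReLU activations:
  z1 = relu(W0y u + b0); hidden layers (d, Wz, Wy, b) with input width d:
  z' = relu(Wz z + Wy u + b); final affine layer c + wz . z + wy . u.
  Convexity constraints: all Wz and wz are entrywise nonnegative.\<close>
datatype 'm icnn =
  ICNN "nat \<Rightarrow> 'm \<Rightarrow> real" "nat \<Rightarrow> real"
       "(nat \<times> (nat \<Rightarrow> nat \<Rightarrow> real) \<times> (nat \<Rightarrow> 'm \<Rightarrow> real) \<times> (nat \<Rightarrow> real)) list"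
       nat "nat \<Rightarrow> real" "'m \<Rightarrow> real" real

fun icnn_hidden :: "real^'m \<Rightarrow> (nat \<times> (nat \<Rightarrow> nat \<Rightarrow> real) \<times> (nat \<Rightarrow> 'm::finite \<Rightarrow> real) \<times> (nat \<Rightarrow> real)) list
                   \<Rightarrow> (nat \<Rightarrow> real) \<Rightarrow> (nat \<Rightarrow> real)" where
  "icnn_hidden u [] z = z"
| "icnn_hidden u ((d, Wz, Wy, b) # hs) z =
     icnn_hidden u hs (\<lambda>i. relu ((\<Sum>j<d. Wz i j * z j) + (\<Sum>k\<in>UNIV. Wy i k * u $ k) + b i))"

fun icnn_eval :: "'m::finite icnn \<Rightarrow> real^'m \<Rightarrow> real" where
  "icnn_eval (ICNN W0 b0 hs dL wz wy c) u =
     (let z1 = (\<lambda>i. relu ((\<Sum>k\<in>UNIV. W0 i k * u $ k) + b0 i));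
          zL = icnn_hidden u hs z1
      in (\<Sum>j<dL. wz j * zL j) + (\<Sum>k\<in>UNIV. wy k * u $ k) + c)"

fun icnn_valid :: "'m icnn \<Rightarrow> bool" where
  "icnn_valid (ICNN W0 b0 hs dL wz wy c) \<longleftrightarrow>
     (\<forall>(d, Wz, Wy, b) \<in> set hs. \<forall>i j. 0 \<le> Wz i j) \<and> (\<forall>j. 0 \<le> wz j)"

end

(* The convex factor plays no role: a coordinate projection is an affine, hence valid, ICNN,
so it suffices to approximate f by one output coordinate of a smooth network.  By
Stone-Weierstrass f is close to a polynomial, which is built from coordinates and constants
by sums and products, and products reduce to squares by polarization.  Composing a network
with a univariate one-hidden-layer rho-network adds one layer, so everything follows once
u |-> u and u |-> u^2 are uniform limits of such shallow networks on compact intervals.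
For u this is the first-order Taylor expansion of rho at a point where rho' does not vanish.
For u^2, pick a, b with rho' a ~= rho' b (rho is not affine) and an antiderivative P of rho:
sigma = P(. + b - a) - P has a Lipschitz second derivative with sigma'' a ~= 0, so its
second difference quotients at a converge to u^2, while sigma itself is a uniform limit of
Riemann sums of rho, which are shallow networks. *)

theory Submission
  imports Defs
begin

section \<open>Calculus estimates\<close>

lemma taylor_first_order_error:
  fixes f f' :: "real \<Rightarrow> real"
  assumes deriv: "\<And>x. \<bar>x - a\<bar> \<le> \<bar>b - a\<bar> \<Longrightarrow> (f has_real_derivative f' x) (at x)"
    and lip: "\<And>x. \<bar>x - a\<bar> \<le> \<bar>b - a\<bar> \<Longrightarrow> \<bar>f' x - f' a\<bar> \<le> C * \<bar>x - a\<bar>"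
    and "0 \<le> C"
  shows "\<bar>f b - f a - f' a * (b - a)\<bar> \<le> C * (b - a)\<^sup>2"
proof -
  let ?S = "cball a \<bar>b - a\<bar>"
  have "norm ((f b - f' a * b) - (f a - f' a * a)) \<le> C * \<bar>b - a\<bar> * norm (b - a)"
  proof (rule field_differentiable_bound[where f' = "\<lambda>x. f' x - f' a"])
    fix x assume "x \<in> ?S"
    then have x: "\<bar>x - a\<bar> \<le> \<bar>b - a\<bar>" by (simp add: dist_real_def abs_minus_commute)
    show "((\<lambda>x. f x - f' a * x) has_field_derivative f' x - f' a) (at x within ?S)"
      using has_field_derivative_at_within[OF deriv[OF x]] by (auto intro!: derivative_eq_intros)
    show "norm (f' x - f' a) \<le> C * \<bar>b - a\<bar>"
      using lip[OF x] mult_left_mono[OF x \<open>0 \<le> C\<close>] by simp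
  qed (simp_all add: dist_real_def)
  then show ?thesis by (simp add: algebra_simps power2_eq_square)
qed

lemma second_difference_error:
  fixes f f' f'' :: "real \<Rightarrow> real"
  assumes f: "\<And>x. \<bar>x - a\<bar> \<le> \<bar>v\<bar> \<Longrightarrow> (f has_real_derivative f' x) (at x)"
    and f': "\<And>x. \<bar>x - a\<bar> \<le> \<bar>v\<bar> \<Longrightarrow> (f' has_real_derivative f'' x) (at x)"
    and f'': "\<And>x. \<bar>x - a\<bar> \<le> \<bar>v\<bar> \<Longrightarrow> \<bar>f'' x - f'' a\<bar> \<le> C * \<bar>x - a\<bar>"
    and "0 \<le> C"
  shows "\<bar>f (a + v) + f (a - v) - 2 * f a - f'' a * v\<^sup>2\<bar> \<le> 2 * C * \<bar>v\<bar> ^ 3"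
proof -
  define \<phi> where "\<phi> w = f (a + w) + f (a - w) - 2 * f a - f'' a * w\<^sup>2" for w
  define \<phi>' where "\<phi>' w = f' (a + w) - f' (a - w) - 2 * f'' a * w" for w
  have "norm (\<phi> v - \<phi> 0) \<le> 2 * C * v\<^sup>2 * norm (v - 0)"
  proof (rule field_differentiable_bound[where f' = \<phi>'])
    fix w :: real assume "w \<in> cball 0 \<bar>v\<bar>"
    then have w: "\<bar>w\<bar> \<le> \<bar>v\<bar>" by simp
    have "((\<lambda>w. f (a + w)) has_real_derivative f' (a + w) * 1) (at w)"
      using w by (intro DERIV_chain2[where g = "\<lambda>w. a + w"] f) (auto intro!: derivative_eq_intros)
    moreover have "((\<lambda>w. f (a - w)) has_real_derivative f' (a - w) * (- 1)) (at w)"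
      using w by (intro DERIV_chain2[where g = "\<lambda>w. a - w"] f) (auto intro!: derivative_eq_intros)
    moreover have "((\<lambda>w. w\<^sup>2) has_real_derivative 2 * w) (at w)"
      by (auto intro!: derivative_eq_intros)
    ultimately have "(\<phi> has_real_derivative f' (a + w) * 1 + f' (a - w) * (- 1) - 0 - f'' a * (2 * w)) (at w)"
      unfolding \<phi>_def by (intro DERIV_diff DERIV_add DERIV_cmult DERIV_const)
    then have "(\<phi> has_real_derivative \<phi>' w) (at w)"
      by (rule DERIV_cong) (simp add: \<phi>'_def)
    then show "(\<phi> has_field_derivative \<phi>' w) (at w within cball 0 \<bar>v\<bar>)"
      by (rule has_field_derivative_at_within)
    have f'_deriv: "(f' has_real_derivative f'' x) (at x)" if "\<bar>x - a\<bar> \<le> \<bar>w\<bar>" for x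
      using that w by (auto intro!: f')
    have f''_lip: "\<bar>f'' x - f'' a\<bar> \<le> C * \<bar>x - a\<bar>" if "\<bar>x - a\<bar> \<le> \<bar>w\<bar>" for x
      using that w by (auto intro!: f'')
    have "\<bar>f' (a + w) - f' a - f'' a * w\<bar> \<le> C * w\<^sup>2"
      using taylor_first_order_error[of a "a + w" f' f'' C] f'_deriv f''_lip \<open>0 \<le> C\<close> by simp
    moreover have "\<bar>f' (a - w) - f' a + f'' a * w\<bar> \<le> C * w\<^sup>2"
      using taylor_first_order_error[of a "a - w" f' f'' C] f'_deriv f''_lip \<open>0 \<le> C\<close> by simp
    moreover have "C * w\<^sup>2 \<le> C * v\<^sup>2"
      using w \<open>0 \<le> C\<close> by (simp add: mult_left_mono abs_le_square_iff)
    ultimately show "norm (\<phi>' w) \<le> 2 * C * v\<^sup>2"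
      unfolding \<phi>'_def by simp
  qed auto
  moreover have "\<phi> 0 = 0" by (simp add: \<phi>_def)
  ultimately show ?thesis
    by (simp add: \<phi>_def power2_eq_square power3_eq_cube mult.assoc)
qed

lemma riemann_sum_error:
  fixes F f :: "real \<Rightarrow> real" and N :: nat
  assumes F: "\<And>x. \<bar>x - s\<bar> \<le> \<bar>\<delta>\<bar> \<Longrightarrow> (F has_real_derivative f x) (at x)"
    and f: "\<And>x y. \<bar>x - s\<bar> \<le> \<bar>\<delta>\<bar> \<Longrightarrow> \<bar>y - s\<bar> \<le> \<bar>\<delta>\<bar> \<Longrightarrow> \<bar>f y - f x\<bar> \<le> B * \<bar>y - x\<bar>"
    and "0 \<le> B" "0 < N"
  shows "\<bar>F (s + \<delta>) - F s - (\<Sum>k<N. \<delta> / N * f (s + k * (\<delta> / N)))\<bar> \<le> B * \<delta>\<^sup>2 / N"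
proof -
  define h where "h = \<delta> / N"
  have \<delta>: "\<delta> = N * h" using \<open>0 < N\<close> by (simp add: h_def)
  have step: "\<bar>F (s + Suc k * h) - F (s + k * h) - h * f (s + k * h)\<bar> \<le> B * h\<^sup>2" if "k < N" for k
  proof -
    have near: "\<bar>x - s\<bar> \<le> \<bar>\<delta>\<bar>" if "\<bar>x - (s + k * h)\<bar> \<le> \<bar>s + Suc k * h - (s + k * h)\<bar>" for x
    proof -
      have "\<bar>x - s\<bar> \<le> \<bar>h\<bar> + k * \<bar>h\<bar>"
        using that abs_triangle_ineq[of "x - (s + k * h)" "k * h"] by (simp add: abs_mult algebra_simps)
      also have "\<dots> \<le> N * \<bar>h\<bar>"
        using \<open>k < N\<close> mult_right_mono[of "Suc k" N "\<bar>h\<bar>"] by (simp add: algebra_simps)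
      finally show ?thesis by (simp add: \<delta> abs_mult)
    qed
    have "\<bar>s + k * h - s\<bar> \<le> \<bar>\<delta>\<bar>" using near[of "s + k * h"] by simp
    then show ?thesis
      using taylor_first_order_error[of "s + k * h" "s + Suc k * h" F f B] F f near \<open>0 \<le> B\<close>
      by (simp add: algebra_simps)
  qed
  have "F (s + \<delta>) - F s = (\<Sum>k<N. F (s + Suc k * h) - F (s + k * h))"
    using sum_lessThan_telescope[of "\<lambda>k. F (s + k * h)" N] by (simp add: \<delta>)
  then have "\<bar>F (s + \<delta>) - F s - (\<Sum>k<N. h * f (s + k * h))\<bar>
      = \<bar>\<Sum>k<N. F (s + Suc k * h) - F (s + k * h) - h * f (s + k * h)\<bar>"
    by (simp add: sum_subtractf)
  also have "\<dots> \<le> (\<Sum>k<N. B * h\<^sup>2)"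
    by (intro order_trans[OF sum_abs sum_mono] step) simp
  also have "\<dots> = B * \<delta>\<^sup>2 / N"
    using \<open>0 < N\<close> by (simp add: h_def power2_eq_square)
  finally show ?thesis by (simp add: h_def)
qed

lemma has_antiderivative_on_interval:
  fixes f :: "real \<Rightarrow> real"
  assumes "continuous_on {-M..M} f"
  shows "\<exists>F. \<forall>x. \<bar>x\<bar> < M \<longrightarrow> (F has_real_derivative f x) (at x)"
proof (intro exI allI impI)
  fix x :: real assume "\<bar>x\<bar> < M"
  then have "((\<lambda>x. integral {-M..x} f) has_real_derivative f x) (at x within {-M..M})"
    by (intro integral_has_real_derivative assms) auto
  moreover have "at x within {-M..M} = at x"
    using \<open>\<bar>x\<bar> < M\<close> by (intro at_within_Icc_at) auto
  ultimately show "((\<lambda>x. integral {-M..x} f) has_real_derivative f x) (at x)" by simp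
qed

lemma DERIV_const_imp_affine:
  fixes f :: "real \<Rightarrow> real"
  assumes "\<And>x. (f has_real_derivative c) (at x)"
  shows "f x = c * x + f 0"
proof -
  have "((\<lambda>x. f x - c * x) has_real_derivative c - c * 1) (at y)" for y
    by (intro DERIV_diff assms DERIV_cmult DERIV_ident)
  then have "f x - c * x = f 0 - c * 0"
    by (intro DERIV_isconst_all) simp
  then show ?thesis by simp
qed

section \<open>Uniform approximation by network classes\<close>

definition uniformly_approximable :: "'a set \<Rightarrow> ('a \<Rightarrow> real) set \<Rightarrow> ('a \<Rightarrow> real) \<Rightarrow> bool" where
  "uniformly_approximable K F f \<longleftrightarrow> (\<forall>e>0. \<exists>g\<in>F. \<forall>x\<in>K. \<bar>f x - g x\<bar> \<le> e)"

lemma uniformly_approximable_mem: "g \<in> F \<Longrightarrow> uniformly_approximable K F g"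
  unfolding uniformly_approximable_def by force

lemma uniformly_approximable_trans:
  assumes "\<And>e. e > 0 \<Longrightarrow> \<exists>h. uniformly_approximable K F h \<and> (\<forall>x\<in>K. \<bar>f x - h x\<bar> \<le> e)"
  shows "uniformly_approximable K F f"
  unfolding uniformly_approximable_def
proof (intro allI impI)
  fix e :: real assume "e > 0"
  then obtain h where h: "uniformly_approximable K F h" "\<forall>x\<in>K. \<bar>f x - h x\<bar> \<le> e / 2"
    using assms[of "e / 2"] by auto
  then obtain g where "g \<in> F" and g: "\<forall>x\<in>K. \<bar>h x - g x\<bar> \<le> e / 2"
    using \<open>e > 0\<close> unfolding uniformly_approximable_def by (meson half_gt_zero)
  moreover have "\<bar>f x - g x\<bar> \<le> e" if "x \<in> K" for x
    using h(2) g that abs_triangle_ineq[of "f x - h x" "h x - g x"] by fastforce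
  ultimately show "\<exists>g\<in>F. \<forall>x\<in>K. \<bar>f x - g x\<bar> \<le> e"
    by blast
qed

lemma uniformly_approximable_add:
  assumes F_add: "\<And>g h. g \<in> F \<Longrightarrow> h \<in> F \<Longrightarrow> (\<lambda>x. g x + h x) \<in> F"
    and "uniformly_approximable K F f" "uniformly_approximable K F f'"
  shows "uniformly_approximable K F (\<lambda>x. f x + f' x)"
  unfolding uniformly_approximable_def
proof (intro allI impI)
  fix e :: real assume "e > 0"
  then have "e / 2 > 0" by simp
  then obtain g g' where "g \<in> F" "g' \<in> F"
    and g: "\<forall>x\<in>K. \<bar>f x - g x\<bar> \<le> e / 2" and g': "\<forall>x\<in>K. \<bar>f' x - g' x\<bar> \<le> e / 2"
    using assms(2,3) unfolding uniformly_approximable_def by blast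
  moreover have "\<bar>f x + f' x - (g x + g' x)\<bar> \<le> e" if "x \<in> K" for x
  proof -
    have "\<bar>f x + f' x - (g x + g' x)\<bar> \<le> \<bar>f x - g x\<bar> + \<bar>f' x - g' x\<bar>"
      using abs_triangle_ineq[of "f x - g x" "f' x - g' x"] by (simp add: algebra_simps)
    moreover have "\<bar>f x - g x\<bar> \<le> e / 2" "\<bar>f' x - g' x\<bar> \<le> e / 2"
      using g g' that by auto
    ultimately show ?thesis by linarith
  qed
  ultimately show "\<exists>g\<in>F. \<forall>x\<in>K. \<bar>f x + f' x - g x\<bar> \<le> e"
    using F_add[OF \<open>g \<in> F\<close> \<open>g' \<in> F\<close>] by (intro bexI[of _ "\<lambda>x. g x + g' x"]) auto
qed

lemma uniformly_approximable_affine: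
  assumes F_affine: "\<And>g. g \<in> F \<Longrightarrow> (\<lambda>x. c + s * g x) \<in> F"
    and "uniformly_approximable K F f"
  shows "uniformly_approximable K F (\<lambda>x. c + s * f x)"
  unfolding uniformly_approximable_def
proof (intro allI impI)
  fix e :: real assume "e > 0"
  then have "e / (\<bar>s\<bar> + 1) > 0" by simp
  then obtain g where "g \<in> F" and g: "\<forall>x\<in>K. \<bar>f x - g x\<bar> \<le> e / (\<bar>s\<bar> + 1)"
    using assms(2) unfolding uniformly_approximable_def by blast
  have "\<bar>c + s * f x - (c + s * g x)\<bar> \<le> e" if "x \<in> K" for x
  proof -
    have "\<bar>c + s * f x - (c + s * g x)\<bar> = \<bar>s\<bar> * \<bar>f x - g x\<bar>"
      by (simp add: abs_mult[symmetric] algebra_simps)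
    also have "\<dots> \<le> (\<bar>s\<bar> + 1) * (e / (\<bar>s\<bar> + 1))"
      using g that by (intro mult_mono) auto
    finally show ?thesis by simp
  qed
  then show "\<exists>g\<in>F. \<forall>x\<in>K. \<bar>c + s * f x - g x\<bar> \<le> e"
    using F_affine[OF \<open>g \<in> F\<close>] by (intro bexI[of _ "\<lambda>x. c + s * g x"]) auto
qed

lemma sum_lessThan_add: "(\<Sum>k<m + n. f k) = (\<Sum>k<m. f k) + (\<Sum>k<n. f (m + k))" for m n :: nat
  by (induction n) (simp_all add: add_ac)

definition shallow_nets :: "(real \<Rightarrow> real) \<Rightarrow> (real \<Rightarrow> real) set" where
  "shallow_nets \<rho> = {q. \<exists>b (d::nat) w \<alpha> \<beta>. \<forall>u. q u = b + (\<Sum>k<d. w k * \<rho> (\<alpha> k * u + \<beta> k))}"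

lemma shallow_netsI:
  "(\<And>u. q u = b + (\<Sum>k<d. w k * \<rho> (\<alpha> k * u + \<beta> k))) \<Longrightarrow> q \<in> shallow_nets \<rho>"
  for d :: nat
  unfolding shallow_nets_def by blast

lemma shallow_nets_affine:
  assumes "q \<in> shallow_nets \<rho>"
  shows "(\<lambda>u. c + s * q u) \<in> shallow_nets \<rho>"
proof -
  obtain b and d :: nat and w \<alpha> \<beta> where q: "\<And>u. q u = b + (\<Sum>k<d. w k * \<rho> (\<alpha> k * u + \<beta> k))"
    using assms unfolding shallow_nets_def by blast
  show ?thesis
    by (rule shallow_netsI[where b = "c + s * b" and w = "\<lambda>k. s * w k"])
      (simp add: q algebra_simps sum_distrib_left)
qed

lemma shallow_nets_add:
  assumes "q \<in> shallow_nets \<rho>" "q' \<in> shallow_nets \<rho>"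
  shows "(\<lambda>u. q u + q' u) \<in> shallow_nets \<rho>"
proof -
  obtain b and d :: nat and w \<alpha> \<beta> where q: "\<And>u. q u = b + (\<Sum>k<d. w k * \<rho> (\<alpha> k * u + \<beta> k))"
    using assms(1) unfolding shallow_nets_def by blast
  obtain b' and d' :: nat and w' \<alpha>' \<beta>' where q': "\<And>u. q' u = b' + (\<Sum>k<d'. w' k * \<rho> (\<alpha>' k * u + \<beta>' k))"
    using assms(2) unfolding shallow_nets_def by blast
  let ?join = "\<lambda>f f' k. if k < d then f k else f' (k - d)"
  show ?thesis
    by (rule shallow_netsI[where b = "b + b'" and d = "d + d'" and w = "?join w w'"
          and \<alpha> = "?join \<alpha> \<alpha>'" and \<beta> = "?join \<beta> \<beta>'"])
      (simp add: q q' sum_lessThan_add)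
qed

primrec nets :: "(real \<Rightarrow> real) \<Rightarrow> nat \<Rightarrow> (real^'n::finite \<Rightarrow> real) set" where
  "nets \<rho> 0 = {g. \<exists>b w. \<forall>x. g x = b + (\<Sum>j\<in>UNIV. w j * x $ j)}"
| "nets \<rho> (Suc L) = {g. \<exists>b (d::nat) V h. (\<forall>j<d. h j \<in> nets \<rho> L) \<and> (\<forall>x. g x = b + (\<Sum>j<d. V j * \<rho> (h j x)))}"

lemma nets_0I: "(\<And>x. g x = b + (\<Sum>j\<in>UNIV. w j * x $ j)) \<Longrightarrow> g \<in> nets \<rho> 0"
  by auto

lemma nets_SucI:
  "(\<And>j. j < d \<Longrightarrow> h j \<in> nets \<rho> L) \<Longrightarrow> (\<And>x. g x = b + (\<Sum>j<d. V j * \<rho> (h j x))) \<Longrightarrow> g \<in> nets \<rho> (Suc L)"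
  for d :: nat
  by auto

lemma nets_SucE:
  assumes "g \<in> nets \<rho> (Suc L)"
  obtains b and d :: nat and V h where "\<And>j. j < d \<Longrightarrow> h j \<in> nets \<rho> L" "\<And>x. g x = b + (\<Sum>j<d. V j * \<rho> (h j x))"
  using assms by auto

declare nets.simps [simp del]

lemma nets_const: "(\<lambda>x. c) \<in> nets \<rho> L"
proof (cases L)
  case (Suc L')
  show ?thesis
    unfolding Suc by (rule nets_SucI[where d = 0]) simp_all
next
  case 0
  show ?thesis
    unfolding 0 by (rule nets_0I[where w = "\<lambda>j. 0"]) simp
qed

lemma nets_affine:
  assumes "g \<in> nets \<rho> L"
  shows "(\<lambda>x. c + s * g x) \<in> nets \<rho> L"
proof (cases L)
  case 0
  then obtain b w where g: "\<And>x. g x = b + (\<Sum>j\<in>UNIV. w j * x $ j)"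
    using assms by (auto simp: nets.simps)
  show ?thesis
    unfolding 0 by (rule nets_0I[where b = "c + s * b" and w = "\<lambda>j. s * w j"])
      (simp add: g distrib_left sum_distrib_left mult.assoc)
next
  case (Suc L')
  obtain b and d :: nat and V h where h: "\<And>j. j < d \<Longrightarrow> h j \<in> nets \<rho> L'"
    and g: "\<And>x. g x = b + (\<Sum>j<d. V j * \<rho> (h j x))"
    using assms unfolding Suc by (rule nets_SucE) blast
  show ?thesis
    unfolding Suc by (rule nets_SucI[where b = "c + s * b" and V = "\<lambda>j. s * V j"])
      (simp_all add: h g distrib_left sum_distrib_left mult.assoc)
qed

lemma nets_add:
  assumes "g \<in> nets \<rho> L" "g' \<in> nets \<rho> L"
  shows "(\<lambda>x. g x + g' x) \<in> nets \<rho> L"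
proof (cases L)
  case 0
  then obtain b w b' w' where g: "\<And>x. g x = b + (\<Sum>j\<in>UNIV. w j * x $ j)"
    and g': "\<And>x. g' x = b' + (\<Sum>j\<in>UNIV. w' j * x $ j)"
    using assms by (auto simp: nets.simps)
  show ?thesis
    unfolding 0 by (rule nets_0I[where b = "b + b'" and w = "\<lambda>j. w j + w' j"])
      (simp add: g g' distrib_right sum.distrib)
next
  case (Suc L')
  obtain b and d :: nat and V h where h: "\<And>j. j < d \<Longrightarrow> h j \<in> nets \<rho> L'" and g: "\<And>x. g x = b + (\<Sum>j<d. V j * \<rho> (h j x))"
    using assms(1) unfolding Suc by (rule nets_SucE) blast
  obtain b' and d' :: nat and V' h' where h': "\<And>j. j < d' \<Longrightarrow> h' j \<in> nets \<rho> L'" and g': "\<And>x. g' x = b' + (\<Sum>j<d'. V' j * \<rho> (h' j x))"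
    using assms(2) unfolding Suc by (rule nets_SucE) blast
  let ?join = "\<lambda>f f' j. if j < d then f j else f' (j - d)"
  show ?thesis
    unfolding Suc
  proof (rule nets_SucI[where b = "b + b'" and d = "d + d'" and V = "?join V V'" and h = "?join h h'"])
    show "?join h h' j \<in> nets \<rho> L'" if "j < d + d'" for j
      using h h' that by simp
    show "g x + g' x = b + b' + (\<Sum>j<d + d'. ?join V V' j * \<rho> (?join h h' j x))" for x
      by (simp add: g g' sum_lessThan_add)
  qed
qed

lemma shallow_comp_nets:
  assumes "q \<in> shallow_nets \<rho>" "g \<in> nets \<rho> L"
  shows "(\<lambda>x. q (g x)) \<in> nets \<rho> (Suc L)"
proof -
  obtain b and d :: nat and w \<alpha> \<beta> where q: "\<And>u. q u = b + (\<Sum>k<d. w k * \<rho> (\<alpha> k * u + \<beta> k))"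
    using assms(1) unfolding shallow_nets_def by blast
  show ?thesis
    using nets_affine[OF assms(2)]
    by (intro nets_SucI[where h = "\<lambda>k x. \<beta> k + \<alpha> k * g x"]) (auto simp: q add.commute)
qed

lemma nets_continuous:
  assumes "continuous_on UNIV \<rho>" "g \<in> nets \<rho> L"
  shows "continuous_on UNIV g"
  using assms(2)
proof (induction L arbitrary: g)
  case 0
  then obtain b w where "g = (\<lambda>x. b + (\<Sum>j\<in>UNIV. w j * x $ j))"
    by (auto simp: nets.simps)
  then show ?case by (auto intro!: continuous_on_add continuous_on_sum continuous_on_mult_left continuous_on_component)
next
  case (Suc L)
  from Suc.prems obtain b and d :: nat and V h where h: "\<And>j. j < d \<Longrightarrow> h j \<in> nets \<rho> L"
    and g: "\<And>x. g x = b + (\<Sum>j<d. V j * \<rho> (h j x))"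
    by (rule nets_SucE) blast
  then have "g = (\<lambda>x. b + (\<Sum>j<d. V j * \<rho> (h j x)))"
    by auto
  moreover have "continuous_on UNIV (\<lambda>x. \<rho> (h j x))" if "j < d" for j
    using continuous_on_compose2[OF assms(1) Suc.IH[OF h[OF that]]] by simp
  ultimately show ?case
    by (auto intro!: continuous_on_add continuous_on_sum continuous_on_mult_left)
qed

lemma bounded_linear_in_nets:
  fixes f :: "real^'n::finite \<Rightarrow> real"
  assumes "bounded_linear f"
  shows "f \<in> nets \<rho> 0"
proof -
  have "f x = 0 + (\<Sum>j\<in>UNIV. f (axis j 1) * x $ j)" for x
  proof -
    have "f x = f (\<Sum>j\<in>UNIV. x $ j *\<^sub>R axis j 1)"
      by (simp only: basis_expansion[of x, unfolded scalar_mult_eq_scaleR])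
    also have "\<dots> = (\<Sum>j\<in>UNIV. f (axis j 1) * x $ j)"
      using bounded_linear.linear[OF assms]
      by (simp add: linear_sum linear_scale mult.commute)
    finally show ?thesis by simp
  qed
  then show ?thesis by (rule nets_0I)
qed

section \<open>Realization by smooth networks and ICNNs\<close>

lemma sm_hidden_snoc:
  "sm_hidden \<rho> (hs @ [(n, W, b)]) z = (\<lambda>i. \<rho> (b i + (\<Sum>k<n. W i k * sm_hidden \<rho> hs z k)))"
  by (induction \<rho> hs z rule: sm_hidden.induct) auto

lemma sum_div_mod_block:
  fixes F :: "nat \<Rightarrow> 'a::comm_monoid_add"
  assumes "j < d" "n \<le> D"
  shows "(\<Sum>i<d * D. if i div D = j \<and> i mod D < n then F (i mod D) else 0) = (\<Sum>k<n. F k)"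
proof -
  have block: "{i \<in> {..<d * D}. i div D = j \<and> i mod D < n} = (\<lambda>k. j * D + k) ` {..<n}"
  proof (intro equalityI subsetI)
    fix i assume "i \<in> {i \<in> {..<d * D}. i div D = j \<and> i mod D < n}"
    then have "i div D = j" "i mod D < n" by auto
    moreover have "i = j * D + i mod D"
      using div_mult_mod_eq[of i D] \<open>i div D = j\<close> by simp
    ultimately show "i \<in> (\<lambda>k. j * D + k) ` {..<n}"
      by blast
  next
    fix i assume "i \<in> (\<lambda>k. j * D + k) ` {..<n}"
    then obtain k where k: "k < n" "i = j * D + k" by auto
    then have "k < D" using assms(2) by simp
    moreover have "j * D + D \<le> d * D"
      using assms(1) by (metis add.commute mult_Suc mult_le_mono1 Suc_leI)
    ultimately show "i \<in> {i \<in> {..<d * D}. i div D = j \<and> i mod D < n}"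
      using k by auto
  qed
  have "(\<Sum>i<d * D. if i div D = j \<and> i mod D < n then F (i mod D) else 0)
      = (\<Sum>i\<in>{i \<in> {..<d * D}. i div D = j \<and> i mod D < n}. F (i mod D))"
    by (rule sum.inter_filter[symmetric]) simp
  also have "\<dots> = (\<Sum>i\<in>(\<lambda>k. j * D + k) ` {..<n}. F (i mod D))"
    unfolding block ..
  also have "\<dots> = (\<Sum>k<n. F k)"
    using assms(2) by (simp add: sum.reindex inj_on_def)
  finally show ?thesis .
qed

lemma nets_Suc_common_hidden_layer:
  fixes d :: nat
  assumes "\<And>j. j < d \<Longrightarrow> h j \<in> nets \<rho> (Suc L)"
  obtains N :: nat and \<psi> c W where "\<And>i. i < N \<Longrightarrow> \<psi> i \<in> nets \<rho> L"
    and "\<And>j x. j < d \<Longrightarrow> h j x = c j + (\<Sum>i<N. W j i * \<rho> (\<psi> i x))"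
proof -
  have "\<forall>j<d. \<exists>c (n::nat) V g. (\<forall>k<n. g k \<in> nets \<rho> L) \<and> (\<forall>x. h j x = c + (\<Sum>k<n. V k * \<rho> (g k x)))"
    using assms by (simp add: nets.simps)
  then obtain c and n :: "nat \<Rightarrow> nat" and V g where "\<forall>j<d. (\<forall>k<n j. g j k \<in> nets \<rho> L) \<and>
      (\<forall>x. h j x = c j + (\<Sum>k<n j. V j k * \<rho> (g j k x)))"
    unfolding choice_iff' by blast
  then have g: "\<And>j k. j < d \<Longrightarrow> k < n j \<Longrightarrow> g j k \<in> nets \<rho> L"
    and h: "\<And>j x. j < d \<Longrightarrow> h j x = c j + (\<Sum>k<n j. V j k * \<rho> (g j k x))"
    by auto
  define D where "D = (\<Sum>j<d. n j)"
  have n_le_D: "n j \<le> D" if "j < d" for j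
    unfolding D_def using that by (intro member_le_sum) auto
  \<comment> \<open>The \<open>k\<close>-th inner network of \<open>h j\<close> becomes neuron \<open>j * D + k\<close> of the common layer.\<close>
  define \<psi> where "\<psi> i = (if i mod D < n (i div D) then g (i div D) (i mod D) else (\<lambda>x. 0))" for i
  define W where "W j i = (if i div D = j \<and> i mod D < n j then V j (i mod D) else 0)" for j i
  show thesis
  proof (rule that[of "d * D" \<psi> c W])
    show "\<psi> i \<in> nets \<rho> L" if "i < d * D" for i
      using that g less_mult_imp_div_less[of i d D] by (simp add: \<psi>_def nets_const)
    fix j x assume "j < d"
    have "(\<Sum>i<d * D. W j i * \<rho> (\<psi> i x))
        = (\<Sum>i<d * D. if i div D = j \<and> i mod D < n j then V j (i mod D) * \<rho> (g j (i mod D) x) else 0)"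
      by (rule sum.cong) (auto simp: W_def \<psi>_def)
    also have "\<dots> = (\<Sum>k<n j. V j k * \<rho> (g j k x))"
      by (rule sum_div_mod_block[OF \<open>j < d\<close> n_le_D[OF \<open>j < d\<close>]])
    finally show "h j x = c j + (\<Sum>i<d * D. W j i * \<rho> (\<psi> i x))"
      using \<open>j < d\<close> by (simp add: h)
  qed
qed

lemma sm_hidden_realizes_nets:
  fixes h :: "nat \<Rightarrow> real^'n::finite \<Rightarrow> real"
  assumes "\<And>j. j < d \<Longrightarrow> h j \<in> nets \<rho> L"
  shows "\<exists>W0 b0 hs. \<forall>x j. j < d \<longrightarrow>
           sm_hidden \<rho> hs (\<lambda>i. \<rho> (b0 i + (\<Sum>k\<in>UNIV. W0 i k * x $ k))) j = \<rho> (h j x)"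
  using assms
proof (induction L arbitrary: d h)
  case 0
  then have "\<forall>j<d. \<exists>b w. \<forall>x. h j x = b + (\<Sum>k\<in>UNIV. w k * x $ k)"
    by (simp add: nets.simps)
  then obtain b w where "\<forall>j<d. \<forall>x. h j x = b j + (\<Sum>k\<in>UNIV. w j k * x $ k)"
    unfolding choice_iff' by blast
  then show ?case
    by (intro exI[of _ w] exI[of _ b] exI[of _ "[]"]) simp
next
  case (Suc L)
  obtain N :: nat and \<psi> c W where "\<And>i. i < N \<Longrightarrow> \<psi> i \<in> nets \<rho> L"
    and h: "\<And>j x. j < d \<Longrightarrow> h j x = c j + (\<Sum>i<N. W j i * \<rho> (\<psi> i x))"
    using nets_Suc_common_hidden_layer[where d = d and h = h, OF Suc.prems] by metis
  then obtain W0 b0 hs where "\<forall>x i. i < N \<longrightarrow>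
      sm_hidden \<rho> hs (\<lambda>i. \<rho> (b0 i + (\<Sum>k\<in>UNIV. W0 i k * x $ k))) i = \<rho> (\<psi> i x)"
    using Suc.IH[of N \<psi>] by blast
  then show ?case
    by (intro exI[of _ W0] exI[of _ b0] exI[of _ "hs @ [(N, W, c)]"]) (simp add: sm_hidden_snoc h)
qed

lemma sm_eval_realizes_nets:
  assumes "g \<in> nets \<rho> (Suc L)"
  shows "\<exists>S :: ('n::finite, 'm::finite) smooth_net. \<forall>x k. sm_eval \<rho> S x $ k = g x"
proof -
  obtain b and d :: nat and V h where h: "\<And>j. j < d \<Longrightarrow> h j \<in> nets \<rho> L"
    and g: "\<And>x. g x = b + (\<Sum>j<d. V j * \<rho> (h j x))"
    using assms by (rule nets_SucE) blast
  obtain W0 :: "nat \<Rightarrow> 'n \<Rightarrow> real" and b0 hs where hs: "\<forall>x j. j < d \<longrightarrow>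
      sm_hidden \<rho> hs (\<lambda>i. \<rho> (b0 i + (\<Sum>k\<in>UNIV. W0 i k * x $ k))) j = \<rho> (h j x)"
    using sm_hidden_realizes_nets[where d = d and h = h, OF h] by blast
  have "sm_eval \<rho> (SNet W0 b0 hs d (\<lambda>_. V) (\<lambda>_. b)) x $ k = g x" for x and k :: 'm
    using hs by (simp add: g)
  then show ?thesis by blast
qed

lemma icnn_coordinate: "\<exists>G :: 'm::finite icnn. icnn_valid G \<and> (\<forall>u. icnn_eval G u = u $ k)"
proof (intro exI conjI allI)
  let ?G = "ICNN (\<lambda>_ _. 0) (\<lambda>_. 0) [] 0 (\<lambda>_. 0) (\<lambda>i. if i = k then 1 else 0) 0 :: 'm icnn"
  show "icnn_valid ?G" by simp
  show "icnn_eval ?G u = u $ k" for u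
    by (simp add: if_distrib[of "\<lambda>c. c * _"] cong: if_cong)
qed

section \<open>Approximation with a nonaffine activation with Lipschitz derivative\<close>

locale nonaffine_C11_activation =
  fixes \<rho> \<rho>' :: "real \<Rightarrow> real" and Lip a b :: real
  assumes deriv: "\<And>x. (\<rho> has_real_derivative \<rho>' x) (at x)"
    and deriv_lipschitz: "\<And>x y. \<bar>\<rho>' x - \<rho>' y\<bar> \<le> Lip * \<bar>x - y\<bar>"
    and deriv_nonconst: "\<rho>' a \<noteq> \<rho>' b"
begin

lemma lipschitz_const_pos: "0 < Lip"
proof -
  have "0 < \<bar>\<rho>' a - \<rho>' b\<bar>" using deriv_nonconst by simp
  also have "\<dots> \<le> Lip * \<bar>a - b\<bar>" by (rule deriv_lipschitz)
  finally show ?thesis by (simp add: zero_less_mult_iff)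
qed

lemma continuous_on_activation: "continuous_on S \<rho>"
  by (meson DERIV_isCont continuous_at_imp_continuous_on deriv)

lemma activation_lipschitz_on_interval:
  assumes "\<bar>x\<bar> \<le> M" "\<bar>y\<bar> \<le> M"
  shows "\<bar>\<rho> y - \<rho> x\<bar> \<le> (\<bar>\<rho>' 0\<bar> + Lip * M) * \<bar>y - x\<bar>"
proof -
  have "norm (\<rho> y - \<rho> x) \<le> (\<bar>\<rho>' 0\<bar> + Lip * M) * norm (y - x)"
  proof (rule field_differentiable_bound[where S = "{-M..M}" and f' = \<rho>'])
    fix z assume "z \<in> {-M..M}"
    then have "Lip * \<bar>z\<bar> \<le> Lip * M"
      using lipschitz_const_pos by (intro mult_left_mono) auto
    then show "norm (\<rho>' z) \<le> \<bar>\<rho>' 0\<bar> + Lip * M"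
      using deriv_lipschitz[of z 0] by simp
  qed (use assms in \<open>auto intro: has_field_derivative_at_within deriv\<close>)
  then show ?thesis by simp
qed

lemma difference_quotient_error:
  assumes "\<rho>' c \<noteq> 0" "t > 0"
  shows "\<bar>u - (\<rho> (c + t * u) - \<rho> c) / (t * \<rho>' c)\<bar> \<le> Lip * t * u\<^sup>2 / \<bar>\<rho>' c\<bar>"
proof -
  have "\<bar>\<rho> (c + t * u) - \<rho> c - \<rho>' c * (c + t * u - c)\<bar> \<le> Lip * (c + t * u - c)\<^sup>2"
    using deriv deriv_lipschitz lipschitz_const_pos by (intro taylor_first_order_error) auto
  moreover have "u - (\<rho> (c + t * u) - \<rho> c) / (t * \<rho>' c)
      = - (\<rho> (c + t * u) - \<rho> c - \<rho>' c * (c + t * u - c)) / (t * \<rho>' c)"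
    using assms by (simp add: field_simps)
  ultimately have "\<bar>u - (\<rho> (c + t * u) - \<rho> c) / (t * \<rho>' c)\<bar> \<le> Lip * (t * u)\<^sup>2 / (t * \<bar>\<rho>' c\<bar>)"
    using assms by (simp add: abs_mult divide_right_mono)
  also have "\<dots> = Lip * t * u\<^sup>2 / \<bar>\<rho>' c\<bar>"
    using assms by (simp add: power2_eq_square)
  finally show ?thesis .
qed

lemma shallow_approx_identity: "uniformly_approximable {-R..R} (shallow_nets \<rho>) (\<lambda>u. u)"
  unfolding uniformly_approximable_def
proof (intro allI impI)
  fix e :: real assume "e > 0"
  obtain c where "\<rho>' c \<noteq> 0" using deriv_nonconst by metis
  have "0 < R\<^sup>2 + 1" by (rule add_nonneg_pos) simp_all
  define t where "t = e * \<bar>\<rho>' c\<bar> / (Lip * (R\<^sup>2 + 1))"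
  have "t > 0"
    unfolding t_def using \<open>\<rho>' c \<noteq> 0\<close> \<open>e > 0\<close> \<open>0 < R\<^sup>2 + 1\<close> lipschitz_const_pos by simp
  define q where "q u = - \<rho> c / (t * \<rho>' c) + 1 / (t * \<rho>' c) * \<rho> (t * u + c)" for u
  have "q \<in> shallow_nets \<rho>"
    by (rule shallow_netsI[where d = 1 and w = "\<lambda>_. 1 / (t * \<rho>' c)" and \<alpha> = "\<lambda>_. t" and \<beta> = "\<lambda>_. c"])
      (simp add: q_def)
  moreover have "\<bar>u - q u\<bar> \<le> e" if "u \<in> {-R..R}" for u
  proof -
    have "q u = (\<rho> (c + t * u) - \<rho> c) / (t * \<rho>' c)"
      by (simp add: q_def diff_divide_distrib add.commute)
    then have "\<bar>u - q u\<bar> \<le> Lip * t * u\<^sup>2 / \<bar>\<rho>' c\<bar>"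
      using difference_quotient_error[OF \<open>\<rho>' c \<noteq> 0\<close> \<open>t > 0\<close>] by simp
    also have "\<dots> \<le> Lip * t * (R\<^sup>2 + 1) / \<bar>\<rho>' c\<bar>"
    proof -
      have "u\<^sup>2 \<le> R\<^sup>2"
        using that by (subst abs_le_square_iff[symmetric]) auto
      then show ?thesis
        using \<open>t > 0\<close> lipschitz_const_pos by (intro divide_right_mono mult_left_mono) auto
    qed
    also have "\<dots> = e"
      unfolding t_def using \<open>\<rho>' c \<noteq> 0\<close> \<open>0 < R\<^sup>2 + 1\<close> lipschitz_const_pos by simp
    finally show ?thesis .
  qed
  ultimately show "\<exists>q\<in>shallow_nets \<rho>. \<forall>u\<in>{-R..R}. \<bar>u - q u\<bar> \<le> e"
    by blast
qed

lemma shallow_approx_antiderivative_difference: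
  assumes P: "\<And>x. \<bar>x\<bar> < M \<Longrightarrow> (P has_real_derivative \<rho> x) (at x)"
    and range: "\<bar>\<alpha>\<bar> * \<bar>R\<bar> + \<bar>\<beta>\<bar> + \<bar>\<delta>\<bar> < M"
  shows "uniformly_approximable {-R..R} (shallow_nets \<rho>) (\<lambda>u. P (\<alpha> * u + \<beta> + \<delta>) - P (\<alpha> * u + \<beta>))"
  unfolding uniformly_approximable_def
proof (intro allI impI)
  fix e :: real assume "e > 0"
  define B where "B = \<bar>\<rho>' 0\<bar> + Lip * M"
  have "0 \<le> \<bar>\<alpha>\<bar> * \<bar>R\<bar> + \<bar>\<beta>\<bar> + \<bar>\<delta>\<bar>" by simp
  then have "0 \<le> M" using range by linarith
  then have "0 \<le> B" using lipschitz_const_pos by (simp add: B_def)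
  obtain n :: nat where "B * \<delta>\<^sup>2 / e < n" using reals_Archimedean2 by blast
  define N where "N = Suc n"
  have "0 < N" by (simp add: N_def)
  have "B * \<delta>\<^sup>2 < e * n"
    using \<open>B * \<delta>\<^sup>2 / e < n\<close> \<open>e > 0\<close> by (simp add: pos_divide_less_eq mult.commute)
  then have "B * \<delta>\<^sup>2 / N \<le> e"
    using \<open>e > 0\<close> by (simp add: N_def divide_le_eq distrib_left mult.commute)
  define q where "q u = 0 + (\<Sum>k<N. \<delta> / N * \<rho> (\<alpha> * u + (\<beta> + k * (\<delta> / N))))" for u
  have "q \<in> shallow_nets \<rho>"
    by (rule shallow_netsI[where b = 0 and d = N and w = "\<lambda>_. \<delta> / N" and \<alpha> = "\<lambda>_. \<alpha>" and \<beta> = "\<lambda>k. \<beta> + k * (\<delta> / N)"])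
      (simp add: q_def)
  moreover have "\<bar>P (\<alpha> * u + \<beta> + \<delta>) - P (\<alpha> * u + \<beta>) - q u\<bar> \<le> e" if "u \<in> {-R..R}" for u
  proof -
    define s where "s = \<alpha> * u + \<beta>"
    have "\<bar>u\<bar> \<le> \<bar>R\<bar>" using that by auto
    then have "\<bar>\<alpha>\<bar> * \<bar>u\<bar> \<le> \<bar>\<alpha>\<bar> * \<bar>R\<bar>" by (rule mult_left_mono) simp
    then have "\<bar>s\<bar> \<le> \<bar>\<alpha>\<bar> * \<bar>R\<bar> + \<bar>\<beta>\<bar>"
      unfolding s_def using abs_triangle_ineq[of "\<alpha> * u" \<beta>] abs_mult[of \<alpha> u] by linarith
    then have near: "\<bar>x\<bar> < M" if "\<bar>x - s\<bar> \<le> \<bar>\<delta>\<bar>" for x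
      using that range by linarith
    have "\<bar>P (s + \<delta>) - P s - (\<Sum>k<N. \<delta> / N * \<rho> (s + k * (\<delta> / N)))\<bar> \<le> B * \<delta>\<^sup>2 / N"
      using near \<open>0 \<le> B\<close> \<open>0 < N\<close>
      by (intro riemann_sum_error P) (auto simp: B_def intro!: activation_lipschitz_on_interval less_imp_le[OF near])
    also have "\<dots> \<le> e" by fact
    finally show ?thesis
      by (simp add: q_def s_def add_ac)
  qed
  ultimately show "\<exists>q\<in>shallow_nets \<rho>. \<forall>u\<in>{-R..R}. \<bar>P (\<alpha> * u + \<beta> + \<delta>) - P (\<alpha> * u + \<beta>) - q u\<bar> \<le> e"
    by blast
qed

lemma antiderivative_second_difference_quotient_error:
  assumes P: "\<And>x. \<bar>x\<bar> < M \<Longrightarrow> (P has_real_derivative \<rho> x) (at x)"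
    and range: "\<bar>c\<bar> + \<bar>t * u\<bar> + \<bar>\<delta>\<bar> < M"
    and \<sigma>_def: "\<And>s. \<sigma> s = P (s + \<delta>) - P s"
    and "t \<noteq> 0" "\<kappa> = \<rho>' (c + \<delta>) - \<rho>' c" "\<kappa> \<noteq> 0"
  shows "\<bar>u\<^sup>2 - (\<sigma> (c + t * u) + \<sigma> (c - t * u) - 2 * \<sigma> c) / (t\<^sup>2 * \<kappa>)\<bar> \<le> 4 * Lip * \<bar>t\<bar> * \<bar>u\<bar> ^ 3 / \<bar>\<kappa>\<bar>"
proof -
  have bound: "\<bar>\<sigma> (c + t * u) + \<sigma> (c - t * u) - 2 * \<sigma> c - \<kappa> * (t * u)\<^sup>2\<bar> \<le> 2 * (2 * Lip) * \<bar>t * u\<bar> ^ 3"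
    unfolding \<open>\<kappa> = _\<close>
  proof (rule second_difference_error[where f' = "\<lambda>s. \<rho> (s + \<delta>) - \<rho> s"])
    fix x assume "\<bar>x - c\<bar> \<le> \<bar>t * u\<bar>"
    then have "\<bar>x + \<delta>\<bar> < M" "\<bar>x\<bar> < M" using range by linarith+
    then have "((\<lambda>s. P (s + \<delta>)) has_real_derivative \<rho> (x + \<delta>)) (at x)" "(P has_real_derivative \<rho> x) (at x)"
      using P DERIV_shift by blast+
    then show "(\<sigma> has_real_derivative \<rho> (x + \<delta>) - \<rho> x) (at x)"
      unfolding \<sigma>_def[abs_def] by (rule DERIV_diff)
    have "((\<lambda>s. \<rho> (s + \<delta>)) has_real_derivative \<rho>' (x + \<delta>)) (at x)"
      using deriv DERIV_shift by blast
    then show "((\<lambda>s. \<rho> (s + \<delta>) - \<rho> s) has_real_derivative \<rho>' (x + \<delta>) - \<rho>' x) (at x)"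
      using deriv by (rule DERIV_diff)
    show "\<bar>\<rho>' (x + \<delta>) - \<rho>' x - (\<rho>' (c + \<delta>) - \<rho>' c)\<bar> \<le> 2 * Lip * \<bar>x - c\<bar>"
      using deriv_lipschitz[of "x + \<delta>" "c + \<delta>"] deriv_lipschitz[of x c] by simp
  qed (use lipschitz_const_pos in simp)
  have "u\<^sup>2 - (\<sigma> (c + t * u) + \<sigma> (c - t * u) - 2 * \<sigma> c) / (t\<^sup>2 * \<kappa>)
      = - (\<sigma> (c + t * u) + \<sigma> (c - t * u) - 2 * \<sigma> c - \<kappa> * (t * u)\<^sup>2) / (t\<^sup>2 * \<kappa>)"
    using \<open>t \<noteq> 0\<close> \<open>\<kappa> \<noteq> 0\<close> by (simp add: diff_divide_distrib power_mult_distrib)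
  then have "\<bar>u\<^sup>2 - (\<sigma> (c + t * u) + \<sigma> (c - t * u) - 2 * \<sigma> c) / (t\<^sup>2 * \<kappa>)\<bar>
      = \<bar>\<sigma> (c + t * u) + \<sigma> (c - t * u) - 2 * \<sigma> c - \<kappa> * (t * u)\<^sup>2\<bar> / \<bar>t\<^sup>2 * \<kappa>\<bar>"
    by (simp only: abs_divide abs_minus_cancel)
  also have "\<dots> \<le> 2 * (2 * Lip) * \<bar>t * u\<bar> ^ 3 / \<bar>t\<^sup>2 * \<kappa>\<bar>"
    by (rule divide_right_mono[OF bound abs_ge_zero])
  also have "\<dots> = 4 * Lip * \<bar>t\<bar> * \<bar>u\<bar> ^ 3 / \<bar>\<kappa>\<bar>"
  proof -
    have "\<bar>t * u\<bar> ^ 3 = \<bar>t\<bar> * t\<^sup>2 * \<bar>u\<bar> ^ 3"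
      by (simp add: abs_mult power_mult_distrib power3_eq_cube power2_eq_square mult_ac)
    then show ?thesis
      using \<open>t \<noteq> 0\<close> by (simp add: abs_mult)
  qed
  finally show ?thesis .
qed

lemma shallow_approx_antiderivative_second_difference:
  assumes P: "\<And>x. \<bar>x\<bar> < M \<Longrightarrow> (P has_real_derivative \<rho> x) (at x)"
    and range: "\<bar>t\<bar> * \<bar>R\<bar> + \<bar>c\<bar> + \<bar>\<delta>\<bar> < M"
    and \<sigma>_def: "\<And>s. \<sigma> s = P (s + \<delta>) - P s"
  shows "uniformly_approximable {-R..R} (shallow_nets \<rho>) (\<lambda>u. (\<sigma> (c + t * u) + \<sigma> (c - t * u) - 2 * \<sigma> c) / z)"
proof -
  have shifted: "uniformly_approximable {-R..R} (shallow_nets \<rho>) (\<lambda>u. \<sigma> (\<alpha> * u + c))" if "\<bar>\<alpha>\<bar> = \<bar>t\<bar>" for \<alpha>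
    using shallow_approx_antiderivative_difference[where \<alpha> = \<alpha> and R = R and \<beta> = c and \<delta> = \<delta>, OF P] range that
    by (simp add: \<sigma>_def add_ac)
  have "(\<lambda>u. (\<sigma> (c + t * u) + \<sigma> (c - t * u) - 2 * \<sigma> c) / z)
      = (\<lambda>u. - 2 * \<sigma> c / z + 1 / z * (\<sigma> (t * u + c) + \<sigma> ((- t) * u + c)))"
    by (simp add: fun_eq_iff diff_divide_distrib add_divide_distrib add_ac)
  then show ?thesis
    by (simp only:) (intro uniformly_approximable_affine uniformly_approximable_add shifted
        shallow_nets_affine shallow_nets_add; simp)
qed

lemma shallow_approx_square: "uniformly_approximable {-R..R} (shallow_nets \<rho>) (\<lambda>u. u\<^sup>2)"
proof (rule uniformly_approximable_trans)
  fix e :: real assume "e > 0"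
  define \<delta> where "\<delta> = b - a"
  define \<kappa> where "\<kappa> = \<rho>' b - \<rho>' a"
  have "\<kappa> \<noteq> 0" using deriv_nonconst by (simp add: \<kappa>_def)
  have "0 < \<bar>R\<bar> ^ 3 + 1" by (rule add_nonneg_pos) simp_all
  define t where "t = e * \<bar>\<kappa>\<bar> / (4 * Lip * (\<bar>R\<bar> ^ 3 + 1))"
  have "t > 0"
    unfolding t_def using \<open>e > 0\<close> \<open>\<kappa> \<noteq> 0\<close> \<open>0 < \<bar>R\<bar> ^ 3 + 1\<close> lipschitz_const_pos by simp
  define M where "M = \<bar>a\<bar> + t * \<bar>R\<bar> + \<bar>\<delta>\<bar> + 1"
  obtain P where P: "\<And>x. \<bar>x\<bar> < M \<Longrightarrow> (P has_real_derivative \<rho> x) (at x)"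
    using has_antiderivative_on_interval[OF continuous_on_activation] by blast
  define \<sigma> where "\<sigma> s = P (s + \<delta>) - P s" for s
  define \<phi> where "\<phi> u = (\<sigma> (a + t * u) + \<sigma> (a - t * u) - 2 * \<sigma> a) / (t\<^sup>2 * \<kappa>)" for u
  have range: "\<bar>t\<bar> * \<bar>R\<bar> + \<bar>a\<bar> + \<bar>\<delta>\<bar> < M"
    using \<open>t > 0\<close> by (simp add: M_def)
  have "uniformly_approximable {-R..R} (shallow_nets \<rho>) \<phi>"
    unfolding \<phi>_def[abs_def] using shallow_approx_antiderivative_second_difference[OF P range] \<sigma>_def by blast
  moreover have "\<bar>u\<^sup>2 - \<phi> u\<bar> \<le> e" if "u \<in> {-R..R}" for u
  proof -
    have "\<bar>u\<bar> \<le> \<bar>R\<bar>" using that by auto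
    then have "\<bar>t * u\<bar> \<le> t * \<bar>R\<bar>"
      using mult_left_mono[OF \<open>\<bar>u\<bar> \<le> \<bar>R\<bar>\<close>, of t] \<open>t > 0\<close> by (simp add: abs_mult)
    then have "\<bar>a\<bar> + \<bar>t * u\<bar> + \<bar>\<delta>\<bar> < M"
      unfolding M_def by linarith
    moreover have "\<kappa> = \<rho>' (a + \<delta>) - \<rho>' a"
      by (simp add: \<kappa>_def \<delta>_def)
    ultimately have "\<bar>u\<^sup>2 - \<phi> u\<bar> \<le> 4 * Lip * \<bar>t\<bar> * \<bar>u\<bar> ^ 3 / \<bar>\<kappa>\<bar>"
      unfolding \<phi>_def using \<open>t > 0\<close> \<open>\<kappa> \<noteq> 0\<close>
      by (intro antiderivative_second_difference_quotient_error[OF P _ \<sigma>_def]) auto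
    also have "\<dots> \<le> 4 * Lip * \<bar>t\<bar> * (\<bar>R\<bar> ^ 3 + 1) / \<bar>\<kappa>\<bar>"
    proof -
      have "\<bar>u\<bar> ^ 3 \<le> \<bar>R\<bar> ^ 3" by (rule power_mono[OF \<open>\<bar>u\<bar> \<le> \<bar>R\<bar>\<close>]) simp
      then have "\<bar>u\<bar> ^ 3 \<le> \<bar>R\<bar> ^ 3 + 1" by linarith
      then show ?thesis
        using lipschitz_const_pos by (intro divide_right_mono mult_left_mono) auto
    qed
    also have "\<dots> = e"
      unfolding abs_of_pos[OF \<open>t > 0\<close>] t_def
      using \<open>e > 0\<close> \<open>\<kappa> \<noteq> 0\<close> \<open>0 < \<bar>R\<bar> ^ 3 + 1\<close> lipschitz_const_pos by simp
    finally show ?thesis .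
  qed
  ultimately show "\<exists>\<phi>. uniformly_approximable {-R..R} (shallow_nets \<rho>) \<phi> \<and> (\<forall>u\<in>{-R..R}. \<bar>u\<^sup>2 - \<phi> u\<bar> \<le> e)"
    by blast
qed

lemma nets_approx_bounded:
  assumes "compact K" "uniformly_approximable K (nets \<rho> L) f"
  obtains B where "\<And>x. x \<in> K \<Longrightarrow> \<bar>f x\<bar> \<le> B"
proof -
  obtain g where "g \<in> nets \<rho> L" and g: "\<forall>x\<in>K. \<bar>f x - g x\<bar> \<le> 1"
    using assms(2) unfolding uniformly_approximable_def by (meson zero_less_one)
  then have "continuous_on K g"
    using nets_continuous[OF continuous_on_activation] continuous_on_subset by blast
  then have "bounded (g ` K)"
    using \<open>compact K\<close> by (simp add: compact_continuous_image compact_imp_bounded)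
  then obtain B where "\<forall>x\<in>K. \<bar>g x\<bar> \<le> B"
    unfolding bounded_iff by auto
  with g have "\<bar>f x\<bar> \<le> B + 1" if "x \<in> K" for x
    using that by (fastforce simp: abs_le_iff)
  then show thesis by (rule that)
qed

lemma nets_approx_comp:
  assumes "compact K" and f: "uniformly_approximable K (nets \<rho> L) f"
    and "continuous_on UNIV \<phi>" and \<phi>: "\<And>R. uniformly_approximable {-R..R} (shallow_nets \<rho>) \<phi>"
  shows "uniformly_approximable K (nets \<rho> (Suc L)) (\<lambda>x. \<phi> (f x))"
  unfolding uniformly_approximable_def
proof (intro allI impI)
  fix e :: real assume "e > 0"
  obtain B where B: "\<And>x. x \<in> K \<Longrightarrow> \<bar>f x\<bar> \<le> B"
    using nets_approx_bounded[OF assms(1,2)] by blast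
  define R where "R = B + 1"
  have "uniformly_continuous_on {-R..R} \<phi>"
    using \<open>continuous_on UNIV \<phi>\<close> by (auto intro: compact_uniformly_continuous continuous_on_subset)
  moreover have "e / 2 > 0" using \<open>e > 0\<close> by simp
  ultimately obtain d where "d > 0"
    and d: "\<forall>y\<in>{-R..R}. \<forall>y'\<in>{-R..R}. \<bar>y' - y\<bar> < d \<longrightarrow> \<bar>\<phi> y' - \<phi> y\<bar> < e / 2"
    unfolding uniformly_continuous_on_def dist_real_def by blast
  have "min 1 (d / 2) > 0" using \<open>d > 0\<close> by simp
  then obtain g where "g \<in> nets \<rho> L" and g: "\<forall>x\<in>K. \<bar>f x - g x\<bar> \<le> min 1 (d / 2)"
    using f unfolding uniformly_approximable_def by blast
  obtain q where "q \<in> shallow_nets \<rho>" and q: "\<forall>y\<in>{-R..R}. \<bar>\<phi> y - q y\<bar> \<le> e / 2"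
    using \<phi>[of R] \<open>e / 2 > 0\<close> unfolding uniformly_approximable_def by blast
  have "\<bar>\<phi> (f x) - q (g x)\<bar> \<le> e" if "x \<in> K" for x
  proof -
    have "\<bar>f x - g x\<bar> \<le> 1" "\<bar>f x - g x\<bar> \<le> d / 2" "\<bar>f x\<bar> \<le> B"
      using g B that by auto
    then have "f x \<in> {-R..R}" "g x \<in> {-R..R}"
      unfolding R_def by (auto simp: abs_le_iff)
    moreover have "\<bar>g x - f x\<bar> < d"
      using \<open>\<bar>f x - g x\<bar> \<le> d / 2\<close> \<open>d > 0\<close> by (simp add: abs_minus_commute)
    ultimately have "\<bar>\<phi> (g x) - \<phi> (f x)\<bar> < e / 2" "\<bar>\<phi> (g x) - q (g x)\<bar> \<le> e / 2"
      using d q by auto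
    then show ?thesis
      unfolding abs_less_iff abs_le_iff by linarith
  qed
  moreover have "(\<lambda>x. q (g x)) \<in> nets \<rho> (Suc L)"
    using \<open>q \<in> shallow_nets \<rho>\<close> \<open>g \<in> nets \<rho> L\<close> by (rule shallow_comp_nets)
  ultimately show "\<exists>h\<in>nets \<rho> (Suc L). \<forall>x\<in>K. \<bar>\<phi> (f x) - h x\<bar> \<le> e"
    by (intro bexI[of _ "\<lambda>x. q (g x)"]) auto
qed

lemma nets_approx_Suc:
  assumes "compact K" "uniformly_approximable K (nets \<rho> L) f"
  shows "uniformly_approximable K (nets \<rho> (Suc L)) f"
  using nets_approx_comp[OF assms continuous_on_id shallow_approx_identity] .

lemma nets_approx_mono:
  assumes "compact K" "uniformly_approximable K (nets \<rho> L) f" "L \<le> L'"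
  shows "uniformly_approximable K (nets \<rho> L') f"
  using assms(3,2) by (induction rule: dec_induct) (auto intro: nets_approx_Suc[OF assms(1)])

lemma nets_approx_square:
  assumes "compact K" "uniformly_approximable K (nets \<rho> L) f"
  shows "uniformly_approximable K (nets \<rho> (Suc L)) (\<lambda>x. (f x)\<^sup>2)"
  using nets_approx_comp[OF assms continuous_on_power[OF continuous_on_id] shallow_approx_square] .

lemma nets_approx_add:
  "uniformly_approximable K (nets \<rho> L) f \<Longrightarrow> uniformly_approximable K (nets \<rho> L) g \<Longrightarrow>
    uniformly_approximable K (nets \<rho> L) (\<lambda>x. f x + g x)"
  by (rule uniformly_approximable_add[OF nets_add])

lemma nets_approx_affine:
  "uniformly_approximable K (nets \<rho> L) f \<Longrightarrow> uniformly_approximable K (nets \<rho> L) (\<lambda>x. c + s * f x)"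
  by (rule uniformly_approximable_affine[OF nets_affine])

lemma nets_approx_mult:
  assumes K: "compact K" and "uniformly_approximable K (nets \<rho> L) f" "uniformly_approximable K (nets \<rho> L') g"
  shows "uniformly_approximable K (nets \<rho> (Suc (max L L'))) (\<lambda>x. f x * g x)"
proof -
  let ?m = "max L L'"
  have f: "uniformly_approximable K (nets \<rho> ?m) f" and g: "uniformly_approximable K (nets \<rho> ?m) g"
    using assms nets_approx_mono[OF K] by auto
  have "uniformly_approximable K (nets \<rho> (Suc ?m))
      (\<lambda>x. (0 + 1/4 * (f x + g x)\<^sup>2) + (0 + (- 1/4) * (f x + (0 + (- 1) * g x))\<^sup>2))"
    by (intro nets_approx_add nets_approx_affine nets_approx_square[OF K] f g)
  moreover have "(\<lambda>x. (0 + 1/4 * (f x + g x)\<^sup>2) + (0 + (- 1/4) * (f x + (0 + (- 1) * g x))\<^sup>2)) = (\<lambda>x. f x * g x)"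
    by (simp add: fun_eq_iff power2_eq_square algebra_simps)
  ultimately show ?thesis by simp
qed

lemma polynomial_nets_approx:
  assumes "compact K" "real_polynomial_function p"
  shows "\<exists>L. uniformly_approximable K (nets \<rho> L) p"
  using assms(2)
proof (induction rule: real_polynomial_function.induct)
  case (linear f)
  then show ?case
    using bounded_linear_in_nets uniformly_approximable_mem by blast
next
  case (const c)
  then show ?case
    using nets_const uniformly_approximable_mem by blast
next
  case (add f g)
  then obtain L L' where "uniformly_approximable K (nets \<rho> L) f" "uniformly_approximable K (nets \<rho> L') g"
    by blast
  then have "uniformly_approximable K (nets \<rho> (max L L')) f" "uniformly_approximable K (nets \<rho> (max L L')) g"
    using nets_approx_mono[OF assms(1)] by simp_all
  then show ?case
    by (blast intro: nets_approx_add)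
next
  case (mult f g)
  then show ?case
    using nets_approx_mult[OF assms(1)] by blast
qed

lemma continuous_nets_approx:
  assumes "compact K" "continuous_on K f" "e > 0"
  shows "\<exists>L g. g \<in> nets \<rho> (Suc L) \<and> (\<forall>x\<in>K. \<bar>f x - g x\<bar> \<le> e)"
proof -
  obtain p where "polynomial_function p" and p: "\<forall>x\<in>K. \<bar>f x - p x\<bar> < e / 2"
    using Stone_Weierstrass_polynomial_function[OF assms(1,2), of "e / 2"] \<open>e > 0\<close> by auto
  then obtain L where "uniformly_approximable K (nets \<rho> L) p"
    using polynomial_nets_approx[OF assms(1)] real_polynomial_function_eq by blast
  then have "uniformly_approximable K (nets \<rho> (Suc L)) p"
    by (rule nets_approx_Suc[OF assms(1)])
  then obtain g where "g \<in> nets \<rho> (Suc L)" and g: "\<forall>x\<in>K. \<bar>p x - g x\<bar> \<le> e / 2"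
    using \<open>e > 0\<close> unfolding uniformly_approximable_def by (meson half_gt_zero)
  moreover have "\<bar>f x - g x\<bar> \<le> e" if "x \<in> K" for x
  proof -
    have "\<bar>f x - p x\<bar> < e / 2" "\<bar>p x - g x\<bar> \<le> e / 2"
      using p g that by auto
    then show ?thesis
      unfolding abs_less_iff abs_le_iff by linarith
  qed
  ultimately show ?thesis by blast
qed

end

lemma smooth_activation_imp_nonaffine_C11:
  assumes "smooth_activation \<rho>"
  obtains \<rho>' Lip a b where "nonaffine_C11_activation \<rho> \<rho>' Lip a b"
proof -
  obtain \<rho>' Lip where deriv: "\<And>x. (\<rho> has_real_derivative \<rho>' x) (at x)"
    and lip: "Lip-lipschitz_on UNIV \<rho>'" and nonaffine: "\<not> (\<exists>a b. \<forall>x. \<rho> x = a * x + b)"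
    using assms unfolding smooth_activation_def by blast
  obtain a b where "\<rho>' a \<noteq> \<rho>' b"
  proof (rule ccontr)
    assume "\<not> thesis"
    with that have "\<rho>' x = \<rho>' 0" for x by blast
    then have "\<rho> x = \<rho>' 0 * x + \<rho> 0" for x
      using deriv by (intro DERIV_const_imp_affine) metis
    with nonaffine show False by blast
  qed
  moreover have "\<bar>\<rho>' x - \<rho>' y\<bar> \<le> Lip * \<bar>x - y\<bar>" for x y
    using lipschitz_onD[OF lip UNIV_I UNIV_I] by (simp add: dist_real_def)
  ultimately show thesis
    using deriv by (intro that[of \<rho>' Lip a b]) unfold_locales
qed

theorem mainTheorem7:
  fixes K :: "(real^'n) set" and f :: "real^'n \<Rightarrow> real" and \<epsilon> :: real
    and \<rho> :: "real \<Rightarrow> real"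
  assumes "compact K" and "continuous_on K f" and "\<epsilon> > 0"
    and "smooth_activation \<rho>"
  shows "\<exists>(G :: 'm::finite icnn) (S :: ('n, 'm) smooth_net).
           icnn_valid G \<and>
           (SUP x\<in>K. ereal \<bar>icnn_eval G (sm_eval \<rho> S x) - f x\<bar>) < ereal \<epsilon>"
proof -
  obtain \<rho>' Lip a b where "nonaffine_C11_activation \<rho> \<rho>' Lip a b"
    using smooth_activation_imp_nonaffine_C11[OF assms(4)] .
  then interpret nonaffine_C11_activation \<rho> \<rho>' Lip a b .
  have "\<epsilon> / 2 > 0" using \<open>\<epsilon> > 0\<close> by simp
  then obtain L g where "g \<in> nets \<rho> (Suc L)" and g: "\<forall>x\<in>K. \<bar>f x - g x\<bar> \<le> \<epsilon> / 2"
    using continuous_nets_approx[OF assms(1,2)] by blast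
  then obtain S :: "('n, 'm) smooth_net" where S: "\<And>x k. sm_eval \<rho> S x $ k = g x"
    using sm_eval_realizes_nets by blast
  obtain G :: "'m icnn" and k where "icnn_valid G" and G: "\<And>u. icnn_eval G u = u $ k"
    using icnn_coordinate by blast
  have "(SUP x\<in>K. ereal \<bar>icnn_eval G (sm_eval \<rho> S x) - f x\<bar>) \<le> ereal (\<epsilon> / 2)"
    using g by (intro SUP_least) (simp add: G S abs_minus_commute)
  also have "\<dots> < ereal \<epsilon>"
    using \<open>\<epsilon> > 0\<close> by simp
  finally show ?thesis
    using \<open>icnn_valid G\<close> by blast
qed

end
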